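(* Let $H$ be a connected, locally finite graph and let $S\subseteq\{0\}\times V(H)$ be a resolving set of $P_\infty\,\Box\, H$. Then for every $u\in V(H)$, the set $S\cup\{(1,u)\}$ is a resolving set of $P_{2\infty}\,\Box\, H$.
   Context: $P_\infty$ has vertex set $\mathbb N=\{0,1,2,\dots\}$ and $P_{2\infty}$ has vertex set $\mathbb Z$; in both, $i,j$ are adjacent iff $|i-j|=1$. The cartesian product $G\Box H$ has vertex set $V(G)\times V(H)$, where $(a,v)$ is adjacent to $(b,w)$ iff either $a=b$ and $vw\in E(H)$, or $v=w$ and $ab\in E(G)$; thus $d_{G\Box H}((a,v),(b,w))=d_G(a,b)+d_H(v,w)$. A vertex $x$ resolves $u,v$ if $d(u,x)\ne d(v,x)$; a set of vertices is a resolving set if every pair of distinct vertices is resolved by some vertex of it. *)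

theory Defs
  imports Main
begin

text \<open>A graph is given by a vertex set V and an adjacency relation E (only edges
between vertices of V matter).\<close>

definition simple_graph :: "'a set \<Rightarrow> ('a \<Rightarrow> 'a \<Rightarrow> bool) \<Rightarrow> bool" where
  "simple_graph V E \<longleftrightarrow> (\<forall>x y. E x y \<longrightarrow> x \<in> V \<and> y \<in> V \<and> E y x \<and> x \<noteq> y)"

definition walk :: "'a set \<Rightarrow> ('a \<Rightarrow> 'a \<Rightarrow> bool) \<Rightarrow> 'a list \<Rightarrow> bool" where
  "walk V E xs \<longleftrightarrow> xs \<noteq> [] \<and> set xs \<subseteq> V \<and>
     (\<forall>i. Suc i < length xs \<longrightarrow> E (xs ! i) (xs ! Suc i))"

definition connected_graph :: "'a set \<Rightarrow> ('a \<Rightarrow> 'a \<Rightarrow> bool) \<Rightarrow> bool" where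
  "connected_graph V E \<longleftrightarrow> V \<noteq> {} \<and>
     (\<forall>x\<in>V. \<forall>y\<in>V. \<exists>xs. walk V E xs \<and> hd xs = x \<and> last xs = y)"

definition locally_finite :: "'a set \<Rightarrow> ('a \<Rightarrow> 'a \<Rightarrow> bool) \<Rightarrow> bool" where
  "locally_finite V E \<longleftrightarrow> (\<forall>v\<in>V. finite {w\<in>V. E v w})"

definition gdist :: "'a set \<Rightarrow> ('a \<Rightarrow> 'a \<Rightarrow> bool) \<Rightarrow> 'a \<Rightarrow> 'a \<Rightarrow> nat" where
  "gdist V E x y = (LEAST n. \<exists>xs. walk V E xs \<and> hd xs = x \<and> last xs = y \<and> length xs = Suc n)"

definition resolving_set :: "'a set \<Rightarrow> ('a \<Rightarrow> 'a \<Rightarrow> bool) \<Rightarrow> 'a set \<Rightarrow> bool" where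
  "resolving_set V E S \<longleftrightarrow> S \<subseteq> V \<and>
     (\<forall>u\<in>V. \<forall>v\<in>V. u \<noteq> v \<longrightarrow> (\<exists>x\<in>S. gdist V E u x \<noteq> gdist V E v x))"

definition box_edge :: "('a \<Rightarrow> 'a \<Rightarrow> bool) \<Rightarrow> ('b \<Rightarrow> 'b \<Rightarrow> bool) \<Rightarrow> 'a \<times> 'b \<Rightarrow> 'a \<times> 'b \<Rightarrow> bool" where
  "box_edge E1 E2 p q \<longleftrightarrow>
     (fst p = fst q \<and> E2 (snd p) (snd q)) \<or> (snd p = snd q \<and> E1 (fst p) (fst q))"

definition path_edge :: "int \<Rightarrow> int \<Rightarrow> bool" where
  "path_edge i j \<longleftrightarrow> \<bar>i - j\<bar> = 1"

definition P_inf_V :: "int set" where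
  "P_inf_V = {i. 0 \<le> i}"

definition P_2inf_V :: "int set" where
  "P_2inf_V = UNIV"

end

theory Submission
  imports Defs
begin

(* In a product  A \<box> H  of an integer interval A (as a path) with a
   connected graph H, distances add up:
     d((a,v),(c,w)) = |a - c| + d_H(v,w).
   The upper bound concatenates a walk in the fibre {a} \<times> V with a walk along the
   path; the lower bound projects any walk to H, each path step changing the
   first coordinate by exactly one.  Consequently, for landmarks (0,s) the
   distance in P_2inf \<box> H from (a,v) equals the distance in P_inf \<box> H from the
   folded vertex (|a|,v).  Two distinct vertices of P_2inf \<box> H with distinct
   folds are therefore separated by S; those with equal folds are (a,v) and
   (-a,v) with a \<noteq> 0, and they are separated by (1,u) since |a-1| \<noteq> |a+1|. *)

definition walk_of_length :: "'a set \<Rightarrow> ('a \<Rightarrow> 'a \<Rightarrow> bool) \<Rightarrow> 'a \<Rightarrow> 'a \<Rightarrow> nat \<Rightarrow> bool" where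
  "walk_of_length V E x y n \<longleftrightarrow> (\<exists>xs. walk V E xs \<and> hd xs = x \<and> last xs = y \<and> length xs = Suc n)"

lemma gdist_Least: "gdist V E x y = (LEAST n. walk_of_length V E x y n)"
  by (simp add: gdist_def walk_of_length_def)

lemma walk_Cons:
  "walk V E (x # xs) \<longleftrightarrow> x \<in> V \<and> (xs = [] \<or> (walk V E xs \<and> E x (hd xs)))"
proof (cases xs)
  case Nil
  then show ?thesis by (simp add: walk_def)
next
  case (Cons y ys)
  have "(\<forall>i. Suc i < length (x # xs) \<longrightarrow> E ((x # xs) ! i) ((x # xs) ! Suc i)) \<longleftrightarrow>
        E x y \<and> (\<forall>i. Suc i < length xs \<longrightarrow> E (xs ! i) (xs ! Suc i))"
    using Cons by (auto simp: less_Suc_eq_0_disj)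
  then show ?thesis using Cons by (auto simp: walk_def)
qed

lemma walk_of_length_0: "walk_of_length V E x y 0 \<longleftrightarrow> x = y \<and> x \<in> V"
proof
  assume "walk_of_length V E x y 0"
  then obtain xs where "walk V E xs" "hd xs = x" "last xs = y" "length xs = 1"
    by (auto simp: walk_of_length_def)
  then show "x = y \<and> x \<in> V" by (cases xs) (auto simp: walk_def)
next
  assume "x = y \<and> x \<in> V"
  then show "walk_of_length V E x y 0"
    unfolding walk_of_length_def by (intro exI[of _ "[x]"]) (auto simp: walk_def)
qed

lemma walk_of_length_Suc:
  "walk_of_length V E x z (Suc n) \<longleftrightarrow> x \<in> V \<and> (\<exists>y. E x y \<and> walk_of_length V E y z n)"
proof
  assume "walk_of_length V E x z (Suc n)"
  then obtain xs where xs: "walk V E xs" "hd xs = x" "last xs = z" "length xs = Suc (Suc n)"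
    by (auto simp: walk_of_length_def)
  then obtain ys where "xs = x # ys" by (cases xs) auto
  moreover from this xs(4) have "ys \<noteq> []" by auto
  ultimately show "x \<in> V \<and> (\<exists>y. E x y \<and> walk_of_length V E y z n)"
    using xs unfolding walk_of_length_def by (auto simp: walk_Cons)
next
  assume "x \<in> V \<and> (\<exists>y. E x y \<and> walk_of_length V E y z n)"
  then obtain ys where "x \<in> V" "E x (hd ys)" "walk V E ys" "last ys = z" "length ys = Suc n"
    by (auto simp: walk_of_length_def)
  then show "walk_of_length V E x z (Suc n)"
    unfolding walk_of_length_def by (intro exI[of _ "x # ys"]) (auto simp: walk_Cons)
qed

lemma walk_of_length_trans:
  "walk_of_length V E x y n \<Longrightarrow> walk_of_length V E y z m \<Longrightarrow> walk_of_length V E x z (n + m)"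
  by (induction n arbitrary: x) (auto simp: walk_of_length_0 walk_of_length_Suc)

lemma connected_gdist_attained:
  assumes "connected_graph V E" "v \<in> V" "w \<in> V"
  shows "walk_of_length V E v w (gdist V E v w)"
proof -
  obtain xs where "walk V E xs" "hd xs = v" "last xs = w"
    using assms by (auto simp: connected_graph_def)
  then have "walk_of_length V E v w (length xs - 1)"
    unfolding walk_of_length_def by (intro exI[of _ xs]) (auto simp: walk_def)
  then show ?thesis unfolding gdist_Least by (rule LeastI)
qed

text \<open>Lower bound: a walk in  A \<box> H  projects to a walk in H, and the path steps
  account for at least the difference of first coordinates.\<close>
lemma box_walk_projection:
  "walk_of_length (A \<times> V) (box_edge path_edge E) p q n \<Longrightarrow>
     \<exists>m. walk_of_length V E (snd p) (snd q) m \<and> m + nat \<bar>fst p - fst q\<bar> \<le> n"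
proof (induction n arbitrary: p)
  case 0
  then show ?case by (auto simp: walk_of_length_0)
next
  case (Suc n)
  then obtain y where p: "p \<in> A \<times> V" and step: "box_edge path_edge E p y"
    and rest: "walk_of_length (A \<times> V) (box_edge path_edge E) y q n"
    by (auto simp: walk_of_length_Suc)
  from Suc.IH[OF rest] obtain m where m: "walk_of_length V E (snd y) (snd q) m"
    "m + nat \<bar>fst y - fst q\<bar> \<le> n" by blast
  from step consider (fibre) "fst p = fst y" "E (snd p) (snd y)"
    | (path) "snd p = snd y" "\<bar>fst p - fst y\<bar> = 1"
    by (auto simp: box_edge_def path_edge_def)
  then show ?case
  proof cases
    case fibre
    then have "walk_of_length V E (snd p) (snd q) (Suc m)"
      using p m by (auto simp: walk_of_length_Suc)
    then show ?thesis using m fibre by (intro exI[of _ "Suc m"]) auto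
  next
    case path
    then show ?thesis using m by (intro exI[of _ m]) auto
  qed
qed

lemma box_walk_fibre:
  "walk_of_length V E v w m \<Longrightarrow> a \<in> A \<Longrightarrow>
     walk_of_length (A \<times> V) (box_edge path_edge E) (a, v) (a, w) m"
proof (induction m arbitrary: v)
  case 0
  then show ?case by (auto simp: walk_of_length_0)
next
  case (Suc m)
  then obtain y where "v \<in> V" "E v y" "walk_of_length V E y w m"
    by (auto simp: walk_of_length_Suc)
  with Suc show ?case
    by (auto simp: walk_of_length_Suc box_edge_def intro!: exI[of _ "(a, y)"])
qed

lemma box_walk_path:
  assumes "{a .. a + int k} \<subseteq> A" and "w \<in> V"
  shows "walk_of_length (A \<times> V) (box_edge path_edge E) (a, w) (a + int k, w) k \<and>
         walk_of_length (A \<times> V) (box_edge path_edge E) (a + int k, w) (a, w) k"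
  using assms(1)
proof (induction k)
  case 0
  then show ?case using assms(2) by (auto simp: walk_of_length_0)
next
  case (Suc k)
  let ?W = "walk_of_length (A \<times> V) (box_edge path_edge E)"
  have "{a .. a + int k} \<subseteq> A" using Suc.prems by auto
  then have IH: "?W (a, w) (a + int k, w) k" "?W (a + int k, w) (a, w) k"
    using Suc.IH by auto
  have "a + int k \<in> A" "a + int (Suc k) \<in> A" using Suc.prems by auto
  then have "?W (a + int k, w) (a + int (Suc k), w) 1" "?W (a + int (Suc k), w) (a + int k, w) 1"
    using assms(2) by (simp_all add: walk_of_length_Suc walk_of_length_0 box_edge_def path_edge_def)
  from walk_of_length_trans[OF IH(1) this(1)] walk_of_length_trans[OF this(2) IH(2)]
  show ?case by simp
qed

lemma gdist_box_path:
  assumes conn: "connected_graph V E"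
    and segment: "{min a c .. max a c} \<subseteq> A" and v: "v \<in> V" and w: "w \<in> V"
  shows "gdist (A \<times> V) (box_edge path_edge E) (a, v) (c, w) = nat \<bar>a - c\<bar> + gdist V E v w"
proof -
  let ?W = "walk_of_length (A \<times> V) (box_edge path_edge E)"
  define d where "d = gdist V E v w"
  have "a \<in> A" using segment by (cases "a \<le> c") auto
  then have fibre: "?W (a, v) (a, w) d"
    unfolding d_def by (rule box_walk_fibre[OF connected_gdist_attained[OF conn v w]])
  have along: "?W (a, w) (c, w) (nat \<bar>a - c\<bar>)"
  proof (cases "a \<le> c")
    case True
    then have "{a .. a + int (nat (c - a))} \<subseteq> A" and c: "a + int (nat (c - a)) = c"
      using segment by auto
    from conjunct1[OF box_walk_path[OF this(1) w]] have "?W (a, w) (c, w) (nat (c - a))"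
      unfolding c .
    moreover have "nat \<bar>a - c\<bar> = nat (c - a)" using True by simp
    ultimately show ?thesis by simp
  next
    case False
    then have "{c .. c + int (nat (a - c))} \<subseteq> A" and a: "c + int (nat (a - c)) = a"
      using segment by auto
    from conjunct2[OF box_walk_path[OF this(1) w]] have "?W (a, w) (c, w) (nat (a - c))"
      unfolding a .
    moreover have "nat \<bar>a - c\<bar> = nat (a - c)" using False by simp
    ultimately show ?thesis by simp
  qed
  have "(LEAST n. ?W (a, v) (c, w) n) = nat \<bar>a - c\<bar> + d"
  proof (rule Least_equality)
    show "?W (a, v) (c, w) (nat \<bar>a - c\<bar> + d)"
      using walk_of_length_trans[OF fibre along] by (simp add: add.commute)
  next
    fix n assume "?W (a, v) (c, w) n"
    from box_walk_projection[OF this] obtain m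
      where "walk_of_length V E v w m" "m + nat \<bar>a - c\<bar> \<le> n" by auto
    moreover from this(1) have "d \<le> m" unfolding d_def gdist_Least by (rule Least_le)
    ultimately show "nat \<bar>a - c\<bar> + d \<le> n" by simp
  qed
  then show ?thesis unfolding gdist_Least d_def .
qed

lemma gdist_fold:
  assumes "connected_graph V E" "v \<in> V" "s \<in> V"
  shows "gdist (P_2inf_V \<times> V) (box_edge path_edge E) (a, v) (0, s)
       = gdist (P_inf_V \<times> V) (box_edge path_edge E) (\<bar>a\<bar>, v) (0, s)"
  using gdist_box_path[OF assms(1) _ assms(2,3), of a 0 P_2inf_V]
        gdist_box_path[OF assms(1) _ assms(2,3), of "\<bar>a\<bar>" 0 P_inf_V]
  by (simp add: P_2inf_V_def P_inf_V_def subset_iff)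

lemma gdist_mirror_separated:
  assumes "connected_graph V E" "v \<in> V" "u \<in> V" "a \<noteq> 0"
  shows "gdist (P_2inf_V \<times> V) (box_edge path_edge E) (a, v) (1, u)
       \<noteq> gdist (P_2inf_V \<times> V) (box_edge path_edge E) (- a, v) (1, u)"
  using gdist_box_path[OF assms(1) _ assms(2,3), of a 1 P_2inf_V]
        gdist_box_path[OF assms(1) _ assms(2,3), of "- a" 1 P_2inf_V] assms(4)
  by (simp add: P_2inf_V_def nat_eq_iff abs_if split: if_splits)

theorem lemma8:
  fixes V :: "'a set" and E :: "'a \<Rightarrow> 'a \<Rightarrow> bool" and S :: "(int \<times> 'a) set" and u :: 'a
  assumes "simple_graph V E" and "connected_graph V E" and "locally_finite V E"
    and "S \<subseteq> {0} \<times> V"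
    and "resolving_set (P_inf_V \<times> V) (box_edge path_edge E) S"
    and "u \<in> V"
  shows "resolving_set (P_2inf_V \<times> V) (box_edge path_edge E) (S \<union> {(1, u)})"
  unfolding resolving_set_def
proof (intro conjI ballI impI)
  let ?dZ = "gdist (P_2inf_V \<times> V) (box_edge path_edge E)"
  let ?dN = "gdist (P_inf_V \<times> V) (box_edge path_edge E)"
  show "S \<union> {(1, u)} \<subseteq> P_2inf_V \<times> V" using assms(4,6) by (auto simp: P_2inf_V_def)
  fix p q assume "p \<in> P_2inf_V \<times> V" "q \<in> P_2inf_V \<times> V" "p \<noteq> q"
  then obtain a v b w where pq: "p = (a, v)" "q = (b, w)" "v \<in> V" "w \<in> V" "(a, v) \<noteq> (b, w)"
    by auto
  show "\<exists>x\<in>S \<union> {(1, u)}. ?dZ p x \<noteq> ?dZ q x"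
  proof (cases "(\<bar>a\<bar>, v) = (\<bar>b\<bar>, w)")
    case True
    then have "b = - a" "w = v" "a \<noteq> 0" using pq by (auto simp: abs_if split: if_splits)
    then show ?thesis
      using gdist_mirror_separated[OF assms(2) pq(3) assms(6)] pq by auto
  next
    case False
    moreover have "(\<bar>a\<bar>, v) \<in> P_inf_V \<times> V" "(\<bar>b\<bar>, w) \<in> P_inf_V \<times> V"
      using pq by (auto simp: P_inf_V_def)
    ultimately obtain x where "x \<in> S" "?dN (\<bar>a\<bar>, v) x \<noteq> ?dN (\<bar>b\<bar>, w) x"
      using assms(5) unfolding resolving_set_def by blast
    moreover from \<open>x \<in> S\<close> assms(4) obtain s where "x = (0, s)" "s \<in> V" by auto
    ultimately have "x \<in> S" "?dZ p x \<noteq> ?dZ q x"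
      using gdist_fold[OF assms(2) pq(3)] gdist_fold[OF assms(2) pq(4)] pq by auto
    then show ?thesis by blast
  qed
qed

end
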